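(* Let $\Lambda:\mathbb{R}_{\geq1}\to\mathbb{R}_{\geq1}$ be non-decreasing with $\lim_{x\to\infty}\Lambda(x)=\infty$. Then there exists $\varphi\in\Phi$ such that $\mathscr{L}^{s,\Lambda}\subseteq\mathscr{L}_{\varphi}$. Furthermore, there exists $\psi\in\Phi$ such that $\mathscr{L}^{s,\Lambda}\subseteq\mathscr{L}^{ss,\Lambda}\subseteq\mathscr{L}_{\psi}^{\ast}$.
   Context: $\mathscr{L}$ is the set of Liouville numbers (real irrational $\zeta$ such that for every $\eta>0$ there are infinitely many rationals $y/x$, $x\geq1$, with $|\zeta-y/x|\leq x^{-\eta}$). $\Vert\alpha\Vert$ is the distance from $\alpha$ to the nearest integer. $\Phi$ is the set of non-decreasing $\varphi:\mathbb{R}_{\geq 2}\to\mathbb{R}_{\geq 2}$ with $\varphi(x)\to\infty$. For $\varphi\in\Phi$, $\mathscr{L}_{\varphi}$ is the set of $\zeta\in\mathscr{L}$ such that for every positive integer $N$ there is an integer $q$ with $2\leq q\leq\varphi(N)$ and $\Vert q\zeta\Vert\leq q^{-N}$; $\mathscr{L}_{\varphi}^{\ast}$ is the set of $\zeta\in\mathscr{L}$ for which this holds for all $N\geq N_0(\zeta)$. For $\zeta\in\mathscr{L}$ let $s_n/t_n$ ($n\geq0$) be its continued fraction convergents. $\zeta$ is semi-strong if there is a strictly increasing sequence $(v_i)_{i\geq0}$ of non-negative integers such that, defining $\omega(v_i)$ by $|t_{v_i}\zeta-s_{v_i}|=t_{v_i}^{-\omega(v_i)}$, one has $\lim_{i\to\infty}\omega(v_i)=\infty$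 and $\limsup_{i\to\infty}\frac{\log t_{v_{i+1}}}{\log t_{v_i+1}}<\infty$. $\zeta$ is strong if $\lim_{i\to\infty}\omega(i)=\infty$ with $v_i=i$. $\mathscr{L}^{ss,\Lambda}$ (resp. $\mathscr{L}^{s,\Lambda}$) is the set of semi-strong (resp. strong) $\zeta$ for which a sequence $(v_i)$ as in the respective definition can be chosen with $\omega(v_i)\geq\Lambda(i)$ for all $i\geq1$. *)

theory Defs
  imports Complex_Main "HOL-Library.Liminf_Limsup" "HOL-Library.Extended_Real"
begin

definition dist_int :: "real \<Rightarrow> real" where
  "dist_int \<alpha> = min (\<alpha> - of_int \<lfloor>\<alpha>\<rfloor>) (of_int \<lceil>\<alpha>\<rceil> - \<alpha>)"

definition Liouville :: "real set" where
  "Liouville = {\<zeta>. \<zeta> \<notin> \<rat> \<and>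
     (\<forall>\<eta>>0. infinite {r::real. \<exists>x y::int. x \<ge> 1 \<and> r = of_int y / of_int x \<and>
                   \<bar>\<zeta> - r\<bar> \<le> (of_int x) powr (-\<eta>)})}"

definition PhiClass :: "(real \<Rightarrow> real) set" where
  "PhiClass = {\<phi>. (\<forall>x\<ge>2. \<phi> x \<ge> 2) \<and> mono_on {2..} \<phi> \<and> filterlim \<phi> at_top at_top}"

definition L_phi :: "(real \<Rightarrow> real) \<Rightarrow> real set" where
  "L_phi \<phi> = {\<zeta> \<in> Liouville. \<forall>N::nat. N \<ge> 1 \<longrightarrow>
      (\<exists>q::int. 2 \<le> q \<and> real_of_int q \<le> \<phi> (real N) \<and>
                dist_int (of_int q * \<zeta>) \<le> inverse (real_of_int q ^ N))}"

definition L_phi_star :: "(real \<Rightarrow> real) \<Rightarrow> real set" where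
  "L_phi_star \<phi> = {\<zeta> \<in> Liouville. \<exists>N0::nat. \<forall>N::nat. N \<ge> 1 \<and> N \<ge> N0 \<longrightarrow>
      (\<exists>q::int. 2 \<le> q \<and> real_of_int q \<le> \<phi> (real N) \<and>
                dist_int (of_int q * \<zeta>) \<le> inverse (real_of_int q ^ N))}"

text \<open>Continued fraction expansion: complete quotients, partial quotients, convergents \<open>s_n/t_n\<close>.\<close>
fun cf_rem :: "real \<Rightarrow> nat \<Rightarrow> real" where
  "cf_rem \<zeta> 0 = \<zeta>"
| "cf_rem \<zeta> (Suc n) = 1 / (cf_rem \<zeta> n - of_int \<lfloor>cf_rem \<zeta> n\<rfloor>)"

definition cf_a :: "real \<Rightarrow> nat \<Rightarrow> int" where
  "cf_a \<zeta> n = \<lfloor>cf_rem \<zeta> n\<rfloor>"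

fun cf_s :: "real \<Rightarrow> nat \<Rightarrow> int" where
  "cf_s \<zeta> 0 = cf_a \<zeta> 0"
| "cf_s \<zeta> (Suc 0) = cf_a \<zeta> 1 * cf_a \<zeta> 0 + 1"
| "cf_s \<zeta> (Suc (Suc n)) = cf_a \<zeta> (Suc (Suc n)) * cf_s \<zeta> (Suc n) + cf_s \<zeta> n"

fun cf_t :: "real \<Rightarrow> nat \<Rightarrow> int" where
  "cf_t \<zeta> 0 = 1"
| "cf_t \<zeta> (Suc 0) = cf_a \<zeta> 1"
| "cf_t \<zeta> (Suc (Suc n)) = cf_a \<zeta> (Suc (Suc n)) * cf_t \<zeta> (Suc n) + cf_t \<zeta> n"

definition cf_omega :: "real \<Rightarrow> nat \<Rightarrow> real" where
  "cf_omega \<zeta> n = - log (real_of_int (cf_t \<zeta> n))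
                        \<bar>of_int (cf_t \<zeta> n) * \<zeta> - of_int (cf_s \<zeta> n)\<bar>"

definition L_ss :: "(real \<Rightarrow> real) \<Rightarrow> real set" where
  "L_ss \<Lambda> = {\<zeta> \<in> Liouville. \<exists>v::nat \<Rightarrow> nat. strict_mono v \<and>
      filterlim (\<lambda>i. cf_omega \<zeta> (v i)) at_top sequentially \<and>
      limsup (\<lambda>i. ereal (ln (real_of_int (cf_t \<zeta> (v (Suc i))))
                          / ln (real_of_int (cf_t \<zeta> (v i + 1))))) < \<infinity> \<and>
      (\<forall>i\<ge>1. cf_omega \<zeta> (v i) \<ge> \<Lambda> (real i))}"

definition L_s :: "(real \<Rightarrow> real) \<Rightarrow> real set" where
  "L_s \<Lambda> = {\<zeta> \<in> Liouville.
      filterlim (\<lambda>i. cf_omega \<zeta> i) at_top sequentially \<and>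
      (\<forall>i\<ge>1. cf_omega \<zeta> i \<ge> \<Lambda> (real i))}"

end

theory Submission
  imports Defs
begin

text \<open>
  Let \<open>s\<^sub>k/t\<^sub>k\<close> be the convergents of an irrational \<open>\<zeta>\<close>. A large \<open>\<omega>(k)\<close> makes \<open>t\<^sub>k\<close> a
  good denominator; and since \<open>|t\<^sub>k\<zeta> - s\<^sub>k| \<le> 1/t\<^sub>k\<^sub>+\<^sub>1\<close>, so does a large jump from \<open>t\<^sub>k\<close> to
  \<open>t\<^sub>k\<^sub>+\<^sub>1\<close> make \<open>2t\<^sub>k\<close> one (the factor 2 ensures \<open>q \<ge> 2\<close>).

  For strong numbers, \<open>\<omega>(i) \<ge> N\<close> as soon as \<open>\<Lambda>(i) \<ge> N\<close>, i.e. from an index \<open>i\<^sub>N\<close> on.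
  Either \<open>t\<^sub>0,\<dots>,t\<^sub>i\<^sub>N\<close> stay below a fixed, rapidly growing threshold depending only on
  \<open>N\<close> and \<open>i\<^sub>N\<close>, and \<open>t\<^sub>i\<^sub>N\<close> itself works, or the first crossing of the threshold is a jump
  that produces a good denominator below it.

  For semi-strong numbers, \<open>log t\<^sub>v\<^sub>i\<^sub>+\<^sub>1 \<le> C\<cdot>\<omega>(v\<^sub>i)\<cdot>log t\<^sub>v\<^sub>i\<close> eventually. Up to the first
  \<open>i\<close> with \<open>\<omega>(v\<^sub>i) \<ge> N\<close>, which is at most \<open>i\<^sub>N\<close>, the logarithms thus grow at most by the
  factor \<open>C N\<close> per step, which bounds \<open>t\<^sub>v\<^sub>i\<close> in terms of \<open>N\<close> alone once \<open>N\<close> exceeds \<open>C\<close>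
  and the initial logarithm.
\<close>

section \<open>Continued fractions of irrational numbers\<close>

text \<open>The preceding convergent, with the convention \<open>s\<^sub>-\<^sub>1/t\<^sub>-\<^sub>1 = 1/0\<close>.\<close>
definition cf_s_prev :: "real \<Rightarrow> nat \<Rightarrow> int" where
  "cf_s_prev z k = (if k = 0 then 1 else cf_s z (k - 1))"

definition cf_t_prev :: "real \<Rightarrow> nat \<Rightarrow> int" where
  "cf_t_prev z k = (if k = 0 then 0 else cf_t z (k - 1))"

lemma cf_s_Suc: "cf_s z (Suc k) = cf_a z (Suc k) * cf_s z k + cf_s_prev z k"
  by (cases k) (auto simp: cf_s_prev_def)

lemma cf_t_Suc: "cf_t z (Suc k) = cf_a z (Suc k) * cf_t z k + cf_t_prev z k"
  by (cases k) (auto simp: cf_t_prev_def)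

lemma cf_rem_Suc_eq: "cf_rem z (Suc k) = 1 / frac (cf_rem z k)"
  by (simp add: frac_def)

lemma cf_rem_irrational: "z \<notin> \<rat> \<Longrightarrow> cf_rem z k \<notin> \<rat>"
proof (induction k)
  case (Suc k)
  have "frac (cf_rem z k) \<notin> \<rat>"
    using Suc by (metis Rats_add Rats_of_int frac_def diff_add_cancel)
  then show ?case
    unfolding cf_rem_Suc_eq by (metis Rats_inverse inverse_eq_divide inverse_inverse_eq)
qed simp

lemma frac_pos_if_irrational: "(x::real) \<notin> \<rat> \<Longrightarrow> 0 < frac x"
  using Ints_subset_Rats by auto

lemma cf_rem_gt_1: "z \<notin> \<rat> \<Longrightarrow> 1 < cf_rem z (Suc k)"
  unfolding cf_rem_Suc_eq
  using frac_pos_if_irrational[OF cf_rem_irrational, of z k] frac_lt_1[of "cf_rem z k"]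
  by (simp add: less_divide_eq)

lemma cf_a_ge_1: "z \<notin> \<rat> \<Longrightarrow> 1 \<le> cf_a z (Suc k)"
  using cf_rem_gt_1[of z k] unfolding cf_a_def by linarith

lemma cf_t_bounds: "z \<notin> \<rat> \<Longrightarrow> 1 \<le> cf_t z k \<and> 0 \<le> cf_t_prev z k \<and> cf_t_prev z k \<le> cf_t z k"
proof (induction k)
  case (Suc k)
  have "cf_t z k \<le> cf_a z (Suc k) * cf_t z k"
    using cf_a_ge_1[OF Suc.prems, of k] Suc by (simp add: mult_le_cancel_right1)
  then have "cf_t z k \<le> cf_t z (Suc k)"
    using Suc cf_t_Suc[of z k] by linarith
  then show ?case
    using Suc by (simp add: cf_t_prev_def)
qed (simp add: cf_t_prev_def)

lemma cf_t_le_Suc: "z \<notin> \<rat> \<Longrightarrow> cf_t z k \<le> cf_t z (Suc k)"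
  using cf_t_bounds[of z "Suc k"] by (simp add: cf_t_prev_def)

lemma cf_det: "cf_t z k * cf_s_prev z k - cf_s z k * cf_t_prev z k = (-1) ^ k"
proof (induction k)
  case (Suc k)
  have "cf_t z (Suc k) * cf_s_prev z (Suc k) - cf_s z (Suc k) * cf_t_prev z (Suc k)
      = -(cf_t z k * cf_s_prev z k - cf_s z k * cf_t_prev z k)"
    by (simp add: cf_s_Suc cf_t_Suc cf_s_prev_def cf_t_prev_def algebra_simps)
  then show ?case using Suc by simp
qed (simp add: cf_s_prev_def cf_t_prev_def)

lemma cf_value_eq:
  assumes "z \<notin> \<rat>"
  shows "z * (of_int (cf_t z k) * cf_rem z (Suc k) + of_int (cf_t_prev z k))
       = of_int (cf_s z k) * cf_rem z (Suc k) + of_int (cf_s_prev z k)"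
  using assms
proof (induction k)
  case 0
  have "frac z \<noteq> 0" using frac_pos_if_irrational[OF 0] by simp
  then show ?case by (simp add: cf_t_prev_def cf_s_prev_def cf_a_def frac_def field_simps)
next
  case (Suc k)
  define x where "x = cf_rem z (Suc k)"
  define y where "y = cf_rem z (Suc (Suc k))"
  define a where "a = cf_a z (Suc k)"
  have frac_x: "0 < x - of_int a"
    using frac_pos_if_irrational[OF cf_rem_irrational[OF Suc.prems]]
    by (simp only: x_def a_def cf_a_def frac_def)
  have "y = 1 / (x - of_int a)"
    by (simp add: y_def x_def a_def cf_a_def)
  then have x_eq: "x = of_int a + 1 / y" and y_pos: "y > 0"
    using frac_x by simp_all
  have IH: "z * (of_int (cf_t z k) * x + of_int (cf_t_prev z k))
          = of_int (cf_s z k) * x + of_int (cf_s_prev z k)"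
    using Suc by (simp add: x_def)
  have "z * (of_int (cf_t z (Suc k)) * y + of_int (cf_t_prev z (Suc k)))
      = y * (z * (of_int (cf_t z k) * x + of_int (cf_t_prev z k)))"
    using y_pos by (simp add: cf_t_Suc cf_t_prev_def x_eq field_simps a_def)
  also have "\<dots> = y * (of_int (cf_s z k) * x + of_int (cf_s_prev z k))"
    by (simp add: IH)
  also have "\<dots> = of_int (cf_s z (Suc k)) * y + of_int (cf_s_prev z (Suc k))"
    using y_pos by (simp add: cf_s_Suc cf_s_prev_def x_eq field_simps a_def)
  finally show ?case by (simp add: y_def)
qed

lemma cf_error_bounds:
  assumes z: "z \<notin> \<rat>"
  shows "0 < \<bar>of_int (cf_t z k) * z - of_int (cf_s z k)\<bar>"
    and "\<bar>of_int (cf_t z k) * z - of_int (cf_s z k)\<bar> \<le> 1 / of_int (cf_t z (Suc k))"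
proof -
  define x where "x = cf_rem z (Suc k)"
  define D where "D = of_int (cf_t z k) * x + of_int (cf_t_prev z k)"
  define e where "e = of_int (cf_t z k) * z - of_int (cf_s z k)"
  have t: "1 \<le> cf_t z k" "0 \<le> cf_t_prev z k" using cf_t_bounds[OF z] by auto
  have "of_int (cf_t z k) * of_int (cf_a z (Suc k)) \<le> of_int (cf_t z k) * x"
    using t unfolding x_def cf_a_def by (intro mult_left_mono) auto
  then have D_ge: "of_int (cf_t z (Suc k)) \<le> D"
    unfolding D_def cf_t_Suc by (simp add: algebra_simps)
  have "1 < x" using cf_rem_gt_1[OF z] by (simp add: x_def)
  then have D_pos: "0 < D"
    unfolding D_def using t by (smt (verit) of_int_1_le_iff of_int_nonneg mult_less_cancel_left1)
  have "e * D = of_int (cf_t z k) * (z * D) - of_int (cf_s z k) * D"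
    by (simp add: e_def algebra_simps)
  also have "\<dots> = of_int (cf_t z k * cf_s_prev z k - cf_s z k * cf_t_prev z k)"
    using cf_value_eq[OF z, of k] by (simp add: D_def x_def algebra_simps)
  finally have "\<bar>e * D\<bar> = 1"
    by (simp add: cf_det)
  then have "\<bar>e\<bar> * D = 1"
    using D_pos by (simp add: abs_mult)
  then have "\<bar>e\<bar> = 1 / D"
    using D_pos by (simp add: eq_divide_eq)
  also have "\<dots> \<le> 1 / of_int (cf_t z (Suc k))"
    using D_ge cf_t_bounds[OF z, of "Suc k"] by (intro divide_left_mono) auto
  finally show "\<bar>e\<bar> \<le> 1 / of_int (cf_t z (Suc k))" .
  show "0 < \<bar>e\<bar>"
    using \<open>\<bar>e\<bar> = 1 / D\<close> D_pos by simp
qed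

lemma dist_int_le_abs_diff: "dist_int a \<le> \<bar>a - of_int p\<bar>"
proof -
  have "\<lceil>a\<rceil> \<le> \<lfloor>a\<rfloor> + 1"
    by (simp add: ceiling_le_iff)
  then have "p \<le> \<lfloor>a\<rfloor> \<or> \<lceil>a\<rceil> \<le> p"
    by linarith
  then show ?thesis
    unfolding dist_int_def using le_of_int_ceiling[of a] of_int_floor_le[of a]
    by (smt (verit) of_int_le_iff)
qed

lemma cf_t_ge_2_if_cf_omega_pos:
  assumes "z \<notin> \<rat>" "0 < cf_omega z k"
  shows "2 \<le> cf_t z k"
proof -
  have "cf_t z k \<noteq> 1"
    using assms(2) by (auto simp: cf_omega_def log_def)
  then show ?thesis
    using cf_t_bounds[OF assms(1), of k] by simp
qed

lemma cf_error_eq_powr: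
  assumes "z \<notin> \<rat>" "2 \<le> cf_t z k"
  shows "\<bar>of_int (cf_t z k) * z - of_int (cf_s z k)\<bar> = real_of_int (cf_t z k) powr (- cf_omega z k)"
  using assms cf_error_bounds(1)[OF assms(1), of k] by (simp add: cf_omega_def)

lemma ln_cf_t_Suc_le:
  assumes z: "z \<notin> \<rat>" and t: "2 \<le> cf_t z k"
  shows "ln (cf_t z (Suc k)) \<le> cf_omega z k * ln (cf_t z k)"
proof -
  define e where "e = \<bar>of_int (cf_t z k) * z - of_int (cf_s z k)\<bar>"
  have e: "0 < e" "e \<le> 1 / cf_t z (Suc k)"
    using cf_error_bounds[OF z, of k] by (simp_all add: e_def)
  have t_Suc: "1 \<le> cf_t z (Suc k)"
    using cf_t_bounds[OF z] by simp
  have "ln (cf_t z (Suc k)) \<le> ln (1 / e)"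
    using e t_Suc by (subst ln_le_cancel_iff) (auto simp: field_simps)
  also have "\<dots> = cf_omega z k * ln (cf_t z k)"
    using t e by (simp add: cf_omega_def log_def ln_div e_def)
  finally show ?thesis .
qed

section \<open>Good denominators\<close>

definition good_denominator_below :: "real \<Rightarrow> nat \<Rightarrow> real \<Rightarrow> bool" where
  "good_denominator_below z N B \<longleftrightarrow>
     (\<exists>q::int. 2 \<le> q \<and> real_of_int q \<le> B \<and> dist_int (of_int q * z) \<le> inverse (real_of_int q ^ N))"

lemma good_denominator_below_mono:
  "good_denominator_below z N B \<Longrightarrow> B \<le> B' \<Longrightarrow> good_denominator_below z N B'"
  unfolding good_denominator_below_def by force

lemma good_denominator_below_cf_t:
  assumes z: "z \<notin> \<rat>" and N: "1 \<le> N" "real N \<le> cf_omega z k"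
  shows "good_denominator_below z N (cf_t z k)"
proof -
  have t: "2 \<le> cf_t z k"
    using cf_t_ge_2_if_cf_omega_pos[OF z] N by simp
  have "dist_int (of_int (cf_t z k) * z) \<le> \<bar>of_int (cf_t z k) * z - of_int (cf_s z k)\<bar>"
    by (rule dist_int_le_abs_diff)
  also have "\<dots> \<le> real_of_int (cf_t z k) powr (- real N)"
    using t N by (simp add: cf_error_eq_powr[OF z t] powr_mono)
  also have "\<dots> = inverse (real_of_int (cf_t z k) ^ N)"
    using t by (simp add: powr_minus powr_realpow)
  finally show ?thesis
    using t unfolding good_denominator_below_def by auto
qed

lemma good_denominator_below_if_jump:
  assumes z: "z \<notin> \<rat>" and jump: "2 * (2 * cf_t z j) ^ N \<le> cf_t z (Suc j)"
  shows "good_denominator_below z N (2 * cf_t z j)"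
proof -
  define q where "q = 2 * cf_t z j"
  have q: "2 \<le> q"
    using cf_t_bounds[OF z, of j] by (simp add: q_def)
  have "dist_int (of_int q * z) \<le> \<bar>of_int q * z - of_int (2 * cf_s z j)\<bar>"
    by (rule dist_int_le_abs_diff)
  also have "\<dots> = \<bar>2 * (of_int (cf_t z j) * z - of_int (cf_s z j))\<bar>"
    by (simp add: q_def algebra_simps)
  also have "\<dots> = 2 * \<bar>of_int (cf_t z j) * z - of_int (cf_s z j)\<bar>"
    by (simp only: abs_mult abs_numeral)
  also have "\<dots> \<le> 2 / cf_t z (Suc j)"
    using cf_error_bounds(2)[OF z, of j] by simp
  also have "\<dots> \<le> inverse (real_of_int q ^ N)"
  proof -
    have "2 * real_of_int q ^ N \<le> cf_t z (Suc j)"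
      using jump unfolding q_def by (metis of_int_le_iff of_int_mult of_int_numeral of_int_power)
    then show ?thesis
      using q cf_t_bounds[OF z, of "Suc j"] by (simp add: field_simps)
  qed
  finally show ?thesis
    using q unfolding good_denominator_below_def q_def[symmetric] by blast
qed

text \<open>
  \<open>cf_threshold N (k+1) = 2 (2 cf_threshold N k)^N \<cdot> cf_threshold N k\<close>, so whenever \<open>t\<^sub>k\<close> is below
  the threshold and \<open>t\<^sub>k\<^sub>+\<^sub>1\<close> above it, the jump condition holds.
\<close>
fun cf_threshold :: "nat \<Rightarrow> nat \<Rightarrow> nat" where
  "cf_threshold N 0 = 1"
| "cf_threshold N (Suc k) = 2 ^ (N + 1) * cf_threshold N k ^ (N + 1)"

lemma cf_threshold_pos: "1 \<le> cf_threshold N k"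
  by (induction k) auto

lemma cf_threshold_mono: "j \<le> k \<Longrightarrow> cf_threshold N j \<le> cf_threshold N k"
proof (rule lift_Suc_mono_le[of "cf_threshold N"])
  fix k
  have "cf_threshold N k \<le> cf_threshold N k ^ (N + 1)"
    using cf_threshold_pos[of N k] power_increasing[of 1 "N + 1" "cf_threshold N k"] by simp
  also have "\<dots> \<le> 2 ^ (N + 1) * cf_threshold N k ^ (N + 1)"
    by simp
  finally show "cf_threshold N k \<le> cf_threshold N (Suc k)"
    by simp
qed

lemma good_denominator_below_threshold_crossing:
  assumes z: "z \<notin> \<rat>" and below: "cf_t z j \<le> cf_threshold N j"
    and above: "cf_threshold N (Suc j) < cf_t z (Suc j)"
  shows "good_denominator_below z N (2 * cf_threshold N j)"
proof -
  have "2 * (2 * cf_t z j) ^ N = 2 ^ (N + 1) * cf_t z j ^ N"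
    by (simp add: power_mult_distrib)
  also have "\<dots> \<le> 2 ^ (N + 1) * int (cf_threshold N j) ^ N"
    using below cf_t_bounds[OF z, of j] by (intro mult_left_mono power_mono) auto
  also have "\<dots> \<le> 2 ^ (N + 1) * int (cf_threshold N j) ^ (N + 1)"
    using cf_threshold_pos[of N j] by (intro mult_left_mono power_increasing) auto
  also have "\<dots> = cf_threshold N (Suc j)"
    by simp
  also have "\<dots> < cf_t z (Suc j)"
    using above by simp
  finally have "good_denominator_below z N (2 * cf_t z j)"
    by (intro good_denominator_below_if_jump[OF z]) simp
  moreover have "real_of_int (2 * cf_t z j) \<le> real (2 * cf_threshold N j)"
    using below by simp
  ultimately show ?thesis
    by (rule good_denominator_below_mono)
qed

lemma good_denominator_below_cf_threshold:
  assumes z: "z \<notin> \<rat>" and N: "1 \<le> N" "real N \<le> cf_omega z i"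
  shows "good_denominator_below z N (2 * cf_threshold N i)"
proof (cases "\<forall>k\<le>i. cf_t z k \<le> cf_threshold N k")
  case True
  then have "cf_t z i \<le> int (cf_threshold N i)"
    by simp
  then have "real_of_int (cf_t z i) \<le> 2 * cf_threshold N i"
    by linarith
  with good_denominator_below_cf_t[OF assms] show ?thesis
    by (rule good_denominator_below_mono)
next
  case False
  define above where "above k \<longleftrightarrow> int (cf_threshold N k) < cf_t z k" for k
  from False obtain k0 where k0: "k0 \<le> i" "above k0"
    by (auto simp: above_def not_le)
  define k where "k = (LEAST k. above k)"
  have "above k"
    unfolding k_def using k0(2) by (rule LeastI)
  moreover have "k \<le> i"
    using Least_le[of above k0] k0 unfolding k_def by simp
  moreover have "k \<noteq> 0"
    using \<open>above k\<close> by (cases k) (auto simp: above_def)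
  ultimately obtain j where j: "k = Suc j" "above (Suc j)" "j < i"
    by (cases k) auto
  have "cf_t z j \<le> cf_threshold N j"
    using not_less_Least[of j above] j(1) unfolding k_def above_def by simp
  then have "good_denominator_below z N (2 * cf_threshold N j)"
    using j(2) unfolding above_def by (rule good_denominator_below_threshold_crossing[OF z])
  moreover have "real (2 * cf_threshold N j) \<le> real (2 * cf_threshold N i)"
    using cf_threshold_mono[of j i N] j(3) by simp
  ultimately show ?thesis
    by (rule good_denominator_below_mono)
qed

section \<open>Members of \<open>\<Phi>\<close> dominating a sequence\<close>

definition Phi_majorant :: "(nat \<Rightarrow> real) \<Rightarrow> real \<Rightarrow> real" where
  "Phi_majorant g x = real (nat \<lceil>x\<rceil>) + 2 + (\<Sum>m\<le>nat \<lceil>x\<rceil>. g m)"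

lemma Phi_majorant_in_PhiClass:
  assumes g: "\<And>m. 0 \<le> g m"
  shows "Phi_majorant g \<in> PhiClass"
proof -
  have sum_nonneg: "0 \<le> (\<Sum>m\<le>n. g m)" for n
    using g by (simp add: sum_nonneg)
  have "x \<le> Phi_majorant g x" for x
    using sum_nonneg[of "nat \<lceil>x\<rceil>"] unfolding Phi_majorant_def by linarith
  then have "filterlim (Phi_majorant g) at_top at_top"
    by (auto intro: filterlim_at_top_mono[OF filterlim_ident])
  moreover have "mono_on {2..} (Phi_majorant g)"
  proof (rule mono_onI)
    fix x y :: real
    assume "x \<le> y"
    then have n: "nat \<lceil>x\<rceil> \<le> nat \<lceil>y\<rceil>"
      by (intro nat_mono ceiling_mono)
    have "(\<Sum>m\<le>nat \<lceil>x\<rceil>. g m) \<le> (\<Sum>m\<le>nat \<lceil>y\<rceil>. g m)"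
      using g n by (intro sum_mono2) auto
    with of_nat_mono[OF n, where 'a=real] show "Phi_majorant g x \<le> Phi_majorant g y"
      unfolding Phi_majorant_def by linarith
  qed
  moreover have "2 \<le> Phi_majorant g x" for x
    using sum_nonneg[of "nat \<lceil>x\<rceil>"] unfolding Phi_majorant_def by simp
  ultimately show ?thesis
    unfolding PhiClass_def by blast
qed

lemma Phi_majorant_ge:
  assumes "\<And>m. 0 \<le> g m"
  shows "g N \<le> Phi_majorant g (real N)"
proof -
  have "g N \<le> (\<Sum>m\<le>N. g m)"
    using assms by (intro member_le_sum) auto
  then show ?thesis
    unfolding Phi_majorant_def by simp
qed

lemma L_phi_Phi_majorantI:
  assumes "z \<in> Liouville" "\<And>m. 0 \<le> g m"
    and "\<And>N. 1 \<le> N \<Longrightarrow> good_denominator_below z N (g N)"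
  shows "z \<in> L_phi (Phi_majorant g)"
  using assms good_denominator_below_mono[OF _ Phi_majorant_ge]
  unfolding L_phi_def good_denominator_below_def by blast

lemma L_phi_star_Phi_majorantI:
  assumes "z \<in> Liouville" "\<And>m. 0 \<le> g m"
    and "\<And>N. 1 \<le> N \<Longrightarrow> M \<le> N \<Longrightarrow> good_denominator_below z N (g N)"
  shows "z \<in> L_phi_star (Phi_majorant g)"
  using assms good_denominator_below_mono[OF _ Phi_majorant_ge]
  unfolding L_phi_star_def good_denominator_below_def by blast

section \<open>Strong Liouville numbers\<close>

definition Lambda_index :: "(real \<Rightarrow> real) \<Rightarrow> nat \<Rightarrow> nat" where
  "Lambda_index \<Lambda> N = (LEAST i. 1 \<le> i \<and> (\<forall>j\<ge>i. real N \<le> \<Lambda> (real j)))"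

lemma Lambda_index:
  assumes "filterlim \<Lambda> at_top at_top"
  shows "1 \<le> Lambda_index \<Lambda> N" and "Lambda_index \<Lambda> N \<le> j \<Longrightarrow> real N \<le> \<Lambda> (real j)"
proof -
  obtain x0 where x0: "\<And>x. x0 \<le> x \<Longrightarrow> real N \<le> \<Lambda> x"
    using assms unfolding filterlim_at_top eventually_at_top_linorder by blast
  have "1 \<le> max 1 (nat \<lceil>x0\<rceil>) \<and> (\<forall>j\<ge>max 1 (nat \<lceil>x0\<rceil>). real N \<le> \<Lambda> (real j))"
    by (auto intro: x0 simp: le_nat_iff ceiling_le_iff)
  then have "1 \<le> Lambda_index \<Lambda> N \<and> (\<forall>j\<ge>Lambda_index \<Lambda> N. real N \<le> \<Lambda> (real j))"
    unfolding Lambda_index_def by (rule LeastI)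
  then show "1 \<le> Lambda_index \<Lambda> N" and "Lambda_index \<Lambda> N \<le> j \<Longrightarrow> real N \<le> \<Lambda> (real j)"
    by auto
qed

lemma L_s_subset_L_phi:
  assumes "filterlim \<Lambda> at_top at_top"
  shows "L_s \<Lambda> \<subseteq> L_phi (Phi_majorant (\<lambda>N. real (2 * cf_threshold N (Lambda_index \<Lambda> N))))"
proof
  fix z
  assume "z \<in> L_s \<Lambda>"
  then have z: "z \<in> Liouville" and omega: "\<And>i. 1 \<le> i \<Longrightarrow> \<Lambda> (real i) \<le> cf_omega z i"
    by (auto simp: L_s_def)
  show "z \<in> L_phi (Phi_majorant (\<lambda>N. real (2 * cf_threshold N (Lambda_index \<Lambda> N))))"
  proof (rule L_phi_Phi_majorantI[OF z])
    fix N :: nat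
    assume "1 \<le> N"
    moreover have "real N \<le> cf_omega z (Lambda_index \<Lambda> N)"
      using Lambda_index[OF assms, of N] omega[of "Lambda_index \<Lambda> N"] by force
    ultimately show "good_denominator_below z N (real (2 * cf_threshold N (Lambda_index \<Lambda> N)))"
      using z by (intro good_denominator_below_cf_threshold) (simp_all add: Liouville_def)
  qed simp
qed

lemma L_s_subset_L_ss: "L_s \<Lambda> \<subseteq> L_ss \<Lambda>"
proof
  fix z
  assume z: "z \<in> L_s \<Lambda>"
  have "ln (cf_t z (Suc i)) / ln (cf_t z (i + 1)) \<le> 1" for i
    by (cases "ln (cf_t z (Suc i)) = 0") auto
  then have "limsup (\<lambda>i. ereal (ln (cf_t z (Suc i)) / ln (cf_t z (i + 1)))) \<le> 1"
    by (intro Limsup_bounded always_eventually) simp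
  then have "limsup (\<lambda>i. ereal (ln (cf_t z (Suc i)) / ln (cf_t z (i + 1)))) < \<infinity>"
    by (rule le_less_trans) simp
  then show "z \<in> L_ss \<Lambda>"
    using z unfolding L_s_def L_ss_def by (intro CollectI conjI exI[of _ id]) (auto simp: strict_mono_def)
qed

section \<open>Semi-strong Liouville numbers\<close>

lemma le_power_mult_if_step_le:
  fixes L :: "nat \<Rightarrow> real"
  assumes "0 \<le> c" "m \<le> n" and step: "\<And>i. m \<le> i \<Longrightarrow> i < n \<Longrightarrow> L (Suc i) \<le> c * L i"
  shows "L n \<le> c ^ (n - m) * L m"
  using assms(2)
proof (induction n rule: dec_induct)
  case (step k)
  have "L (Suc k) \<le> c * L k"
    using step.hyps by (intro assms(3)) auto
  also have "\<dots> \<le> c * (c ^ (k - m) * L m)"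
    using step.IH assms(1) by (rule mult_left_mono)
  finally show ?case
    using step.hyps(1) by (simp add: Suc_diff_le)
qed simp

lemma growth_bound_while_factor_small:
  fixes T w :: "nat \<Rightarrow> real"
  assumes C: "1 \<le> C" "C \<le> N" and T: "\<And>i. m \<le> i \<Longrightarrow> 0 < T i" "T m \<le> N"
    and step: "\<And>i. m \<le> i \<Longrightarrow> T (Suc i) \<le> C * w i * T i"
    and small: "\<And>i. m \<le> i \<Longrightarrow> i < s \<Longrightarrow> w i < N"
    and s: "m \<le> s" "s - m \<le> k"
  shows "T s \<le> (N * N) ^ k * N"
proof -
  have "T s \<le> (C * N) ^ (s - m) * T m"
  proof (rule le_power_mult_if_step_le)
    fix i
    assume i: "m \<le> i" "i < s"
    have "T (Suc i) \<le> C * w i * T i"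
      using step i(1) .
    also have "\<dots> \<le> C * N * T i"
      using small[OF i] T(1)[OF i(1)] C by (intro mult_right_mono mult_left_mono) auto
    finally show "T (Suc i) \<le> C * N * T i" .
  qed (use C s in auto)
  also have "\<dots> \<le> (N * N) ^ k * N"
  proof (rule mult_mono)
    have "1 * 1 \<le> C * N"
      using C by (intro mult_mono) auto
    then have "(C * N) ^ (s - m) \<le> (C * N) ^ k"
      by (intro power_increasing[OF s(2)]) simp
    also have "\<dots> \<le> (N * N) ^ k"
      using C by (intro power_mono mult_right_mono) auto
    finally show "(C * N) ^ (s - m) \<le> (N * N) ^ k" .
  qed (use C T(2) less_imp_le[OF T(1)[of m]] in auto)
  finally show ?thesis .
qed

lemma eventually_less_if_limsup_less_infinity:
  assumes "limsup f < (\<infinity> :: ereal)"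
  obtains c :: real where "eventually (\<lambda>i. f i < c) sequentially"
proof -
  obtain w where "limsup f < w" "w < \<infinity>"
    using dense[OF assms] by blast
  moreover from this obtain c where "w = ereal c"
    by (cases w) auto
  ultimately show thesis
    using Limsup_lessD that by blast
qed

lemma L_ss_cf_t_growth:
  assumes z: "z \<in> L_ss \<Lambda>" and \<Lambda>_ge_1: "\<forall>x\<ge>1. 1 \<le> \<Lambda> x"
  obtains v C m where "\<And>i. 1 \<le> i \<Longrightarrow> \<Lambda> (real i) \<le> cf_omega z (v i)"
    "\<And>i. 1 \<le> i \<Longrightarrow> 2 \<le> cf_t z (v i)" "1 \<le> C" "1 \<le> m"
    "\<And>i. m \<le> i \<Longrightarrow> ln (cf_t z (v (Suc i))) \<le> C * cf_omega z (v i) * ln (cf_t z (v i))"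
proof -
  have irr: "z \<notin> \<rat>"
    using z by (simp add: L_ss_def Liouville_def)
  from z obtain v where omega: "\<And>i. 1 \<le> i \<Longrightarrow> \<Lambda> (real i) \<le> cf_omega z (v i)"
    and bounded: "limsup (\<lambda>i. ereal (ln (cf_t z (v (Suc i))) / ln (cf_t z (v i + 1)))) < \<infinity>"
    unfolding L_ss_def by blast
  obtain c :: real
    where "eventually (\<lambda>i. ereal (ln (cf_t z (v (Suc i))) / ln (cf_t z (v i + 1))) < c) sequentially"
    using eventually_less_if_limsup_less_infinity[OF bounded] .
  then obtain i1 where ratio: "\<And>i. i1 \<le> i \<Longrightarrow> ln (cf_t z (v (Suc i))) / ln (cf_t z (v i + 1)) < c"
    unfolding eventually_sequentially by auto
  have t_ge_2: "2 \<le> cf_t z (v i)" if "1 \<le> i" for i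
  proof -
    have "1 \<le> \<Lambda> (real i)"
      using \<Lambda>_ge_1 that by simp
    then show ?thesis
      using omega[OF that] by (intro cf_t_ge_2_if_cf_omega_pos[OF irr]) simp
  qed
  have "ln (cf_t z (v (Suc i))) \<le> max 1 c * cf_omega z (v i) * ln (cf_t z (v i))"
    if i: "max i1 1 \<le> i" for i
  proof -
    have t: "2 \<le> cf_t z (v i)"
      using t_ge_2 i by simp
    then have "0 < ln (cf_t z (v i + 1))"
      using cf_t_le_Suc[OF irr, of "v i"] by simp
    then have "ln (cf_t z (v (Suc i))) \<le> max 1 c * ln (cf_t z (v i + 1))"
      using ratio[of i] i by (simp add: divide_less_eq max_mult_distrib_right)
    also have "\<dots> \<le> max 1 c * (cf_omega z (v i) * ln (cf_t z (v i)))"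
      using ln_cf_t_Suc_le[OF irr t] by (intro mult_left_mono) auto
    finally show ?thesis
      by (simp add: mult.assoc)
  qed
  then show thesis
    using omega t_ge_2 by (intro that[of v "max 1 c" "max i1 1"]) auto
qed

lemma L_ss_subset_L_phi_star:
  assumes \<Lambda>_ge_1: "\<forall>x\<ge>1. 1 \<le> \<Lambda> x" and \<Lambda>_lim: "filterlim \<Lambda> at_top at_top"
  shows "L_ss \<Lambda> \<subseteq> L_phi_star (Phi_majorant (\<lambda>N. exp ((real N * real N) ^ Lambda_index \<Lambda> N * real N)))"
proof
  fix z
  assume z: "z \<in> L_ss \<Lambda>"
  then have Liouville: "z \<in> Liouville" and irr: "z \<notin> \<rat>"
    by (simp_all add: L_ss_def Liouville_def)
  obtain v C m where omega: "\<And>i. 1 \<le> i \<Longrightarrow> \<Lambda> (real i) \<le> cf_omega z (v i)"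
    and t_ge_2: "\<And>i. 1 \<le> i \<Longrightarrow> 2 \<le> cf_t z (v i)" and C: "1 \<le> C" and m: "1 \<le> m"
    and growth: "\<And>i. m \<le> i \<Longrightarrow> ln (cf_t z (v (Suc i))) \<le> C * cf_omega z (v i) * ln (cf_t z (v i))"
    using L_ss_cf_t_growth[OF z \<Lambda>_ge_1] by blast
  define T where "T i = ln (cf_t z (v i))" for i
  have T_pos: "0 < T i" if "1 \<le> i" for i
    using t_ge_2[OF that] by (simp add: T_def)
  show "z \<in> L_phi_star (Phi_majorant (\<lambda>N. exp ((real N * real N) ^ Lambda_index \<Lambda> N * real N)))"
  proof (rule L_phi_star_Phi_majorantI[OF Liouville, where M = "max (nat \<lceil>C\<rceil>) (nat \<lceil>T m\<rceil>)"])
    fix N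
    assume N: "1 \<le> N" "max (nat \<lceil>C\<rceil>) (nat \<lceil>T m\<rceil>) \<le> N"
    then have CN: "C \<le> N" "T m \<le> N"
      by linarith+
    define good where "good i \<longleftrightarrow> m \<le> i \<and> real N \<le> cf_omega z (v i)" for i
    define s where "s = (LEAST i. good i)"
    define j where "j = max m (Lambda_index \<Lambda> N)"
    have "good j"
      using Lambda_index(2)[OF \<Lambda>_lim, of N j] omega[of j] m by (force simp: good_def j_def)
    then have "good s" "s \<le> j"
      unfolding s_def by (auto intro: LeastI Least_le)
    then have s: "m \<le> s" "real N \<le> cf_omega z (v s)" "s - m \<le> Lambda_index \<Lambda> N"
      by (auto simp: good_def j_def)
    have "T s \<le> (real N * real N) ^ Lambda_index \<Lambda> N * real N"
    proof (rule growth_bound_while_factor_small[where m = m and w = "\<lambda>i. cf_omega z (v i)"])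
      show "T (Suc i) \<le> C * cf_omega z (v i) * T i" if "m \<le> i" for i
        using growth[OF that] by (simp add: T_def)
      show "cf_omega z (v i) < N" if "m \<le> i" "i < s" for i
        using not_less_Least[of i good] that by (simp add: s_def good_def)
    qed (use C CN T_pos m s in auto)
    then have "exp (T s) \<le> exp ((real N * real N) ^ Lambda_index \<Lambda> N * real N)"
      by simp
    moreover have "exp (T s) = cf_t z (v s)"
      using t_ge_2[of s] m s(1) by (simp add: T_def)
    ultimately have "real_of_int (cf_t z (v s)) \<le> exp ((real N * real N) ^ Lambda_index \<Lambda> N * real N)"
      by simp
    with good_denominator_below_cf_t[OF irr N(1) s(2)]
    show "good_denominator_below z N (exp ((real N * real N) ^ Lambda_index \<Lambda> N * real N))"
      by (rule good_denominator_below_mono)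
  qed simp
qed

theorem proposition3p8:
  fixes \<Lambda> :: "real \<Rightarrow> real"
  assumes "\<forall>x\<ge>1. \<Lambda> x \<ge> 1"
    and "mono_on {1..} \<Lambda>"
    and "filterlim \<Lambda> at_top at_top"
  shows "(\<exists>\<phi>\<in>PhiClass. L_s \<Lambda> \<subseteq> L_phi \<phi>) \<and>
         (\<exists>\<psi>\<in>PhiClass. L_s \<Lambda> \<subseteq> L_ss \<Lambda> \<and> L_ss \<Lambda> \<subseteq> L_phi_star \<psi>)"
  using L_s_subset_L_phi[OF assms(3)] L_s_subset_L_ss[of \<Lambda>] L_ss_subset_L_phi_star[OF assms(1,3)]
    Phi_majorant_in_PhiClass
  by (metis exp_ge_zero of_nat_0_le_iff)

end
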